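(* In the model described in the context, the expected fidelity of the end-to-end entangled link delivered in a successful round is $$F_{\mathrm{e2e}}=\frac{1+3\,\mathbb E(w_{\mathrm{e2e}})}{4},\qquad \mathbb E(w_{\mathrm{e2e}})=\frac{w_{\mathrm m}^2\,w_{\mathrm b}\,e^{-k t_{\mathrm{msg}}}}{p}\,U_1(k),\qquad k=\frac{2}{t_{\mathrm{coh}}},$$ where $U_1(v):=\mathbb E\big(e^{-vX_{\mathrm{diff}}}\mathbf 1_{Y=1}\big)$ with $X_{\mathrm{diff}}=X_{\max}-X_{\min}$ on $A_1^+\cup A_2^+$ and $X_{\mathrm{diff}}=2X_b-X_1-X_2$ on $A_b^+$. Moreover, for every $v$, $$U_1(v)=2\Big(\mathbb E\big(e^{-v(X_1-X_2)}\mathbf 1_{A_{12}^+}\big)+\mathbb E\big(e^{-v(X_1-X_b)}\mathbf 1_{A_{1b}^+}\big)-\mathbb E\big(e^{-v(X_1-X_2)}\mathbf 1_{A_{12}^+A_{1b}^+}\big)\Big)+\mathbb E\big(e^{-v(2X_b-X_1-X_2)}\mathbf 1_{A_b^+}\big)$$ $$\qquad-\mathbb E\big(e^{-v(X_1-X_b)}\mathbf 1_{A_1^+A_2^+}\big)-2\,\mathbb E\big(e^{-v(X_1-X_2)}\mathbf 1_{A_1^+A_b^+}\big)+\mathbb E\big(\mathbf 1_{A_1^+A_2^+A_b^+}\big).$$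
   Context: Random model: integers $t_{\mathrm m},t_{\mathrm b}\ge1$, $t_{\mathrm{msg}}\ge0$, $t_{\mathrm{cut}}>\max\{t_{\mathrm m},t_{\mathrm b},t_{\mathrm{msg}}\}$; $p_{\mathrm m},p_{\mathrm b}\in(0,1)$; $M_1,M_2,M_b$ independent with $\mathbb P(M_1=j)=\mathbb P(M_2=j)=p_{\mathrm m}(1-p_{\mathrm m})^{j-1}$, $\mathbb P(M_b=j)=p_{\mathrm b}(1-p_{\mathrm b})^{j-1}$, $j\ge1$; $X_1=t_{\mathrm m}M_1$, $X_2=t_{\mathrm m}M_2$, $X_b=t_{\mathrm b}M_b$ are the generation times (within a round) of elementary link 1 (end node–border node, metropolitan network 1), link 2 (end node–border node, metropolitan network 2) and link b (between the two border nodes, backbone); $X_{\max},X_{\min}$ their max and min; $Y=1$ iff $X_{\max}-X_{\min}<t_{\mathrm{cut}}$ (successful round), $p=\mathbb P(Y=1)$. Events: for $i,j\in\{1,2,b\}$, $A_i^+=\{X_{\max}=X_i,\ X_{\max}-X_{\min}<t_{\mathrm{cut}}\}$, $A_{ij}^+=\{X_{\max}=X_i,\ X_{\min}=X_j,\ X_{\max}-X_{\min}<t_{\mathrm{cut}}\}$; juxtaposition denotes intersection. Physical model: every link is a two-qubit Werner state $w|\Phi^+\rangle\langle\Phi^+|+(1-w)\mathbb I_4/4$, $|\Phi^+\rangle=(|00\rangle+|11\rangle)/\sqrt2$, with fidelity $(1+3w)/4$; freshly generated metropolitan links (1 and 2) have Werner parameter $w_{\mathrm m}$ and the fresh backbone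 link has $w_{\mathrm b}$. Each stored qubit undergoes the depolarising channel $\rho\mapsto e^{-t/t_{\mathrm{coh}}}\rho+(1-e^{-t/t_{\mathrm{coh}}})\mathbb I_2/2$ over storage time $t$, so a Werner link both of whose qubits are stored for time $t$ has its parameter multiplied by $e^{-2t/t_{\mathrm{coh}}}$. Each border node performs a noiseless entanglement swap as soon as it holds both adjacent links (swap-as-soon-as-possible), and swapping Werner states with parameters $w,w'$ yields a Werner state with parameter $ww'$. After the final swap the end-to-end link is stored for a further time $t_{\mathrm{msg}}$ (classical notification to the end nodes). $w_{\mathrm{e2e}}$ denotes the Werner parameter of the resulting end-to-end link in a successful round (conditioned on $Y=1$) and $F_{\mathrm{e2e}}$ its expected fidelity. *)

theory Defs
  imports "HOL-Probability.Probability"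
begin

text \<open>Outcome of a round: the triple (M1, M2, Mb) of numbers of attempts.\<close>
type_synonym outcome = "nat \<times> nat \<times> nat"

definition geom1 :: "real \<Rightarrow> nat pmf" where
  "geom1 q = map_pmf Suc (geometric_pmf q)"

definition round_pmf :: "real \<Rightarrow> real \<Rightarrow> outcome pmf" where
  "round_pmf pm pb = pair_pmf (geom1 pm) (pair_pmf (geom1 pm) (geom1 pb))"

datatype lnk = L1 | L2 | Lb

definition Xof :: "nat \<Rightarrow> nat \<Rightarrow> lnk \<Rightarrow> outcome \<Rightarrow> real" where
  "Xof tm tb l \<omega> = (case \<omega> of (m1, m2, mb) \<Rightarrow>
     (case l of L1 \<Rightarrow> real (tm * m1) | L2 \<Rightarrow> real (tm * m2) | Lb \<Rightarrow> real (tb * mb)))"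

definition Xmax :: "nat \<Rightarrow> nat \<Rightarrow> outcome \<Rightarrow> real" where
  "Xmax tm tb \<omega> = max (Xof tm tb L1 \<omega>) (max (Xof tm tb L2 \<omega>) (Xof tm tb Lb \<omega>))"

definition Xmin :: "nat \<Rightarrow> nat \<Rightarrow> outcome \<Rightarrow> real" where
  "Xmin tm tb \<omega> = min (Xof tm tb L1 \<omega>) (min (Xof tm tb L2 \<omega>) (Xof tm tb Lb \<omega>))"

definition succ :: "nat \<Rightarrow> nat \<Rightarrow> nat \<Rightarrow> outcome \<Rightarrow> bool" where
  "succ tm tb tcut \<omega> \<longleftrightarrow> Xmax tm tb \<omega> - Xmin tm tb \<omega> < real tcut"

definition Aplus :: "nat \<Rightarrow> nat \<Rightarrow> nat \<Rightarrow> lnk \<Rightarrow> outcome \<Rightarrow> bool" where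
  "Aplus tm tb tcut i \<omega> \<longleftrightarrow> Xmax tm tb \<omega> = Xof tm tb i \<omega> \<and> succ tm tb tcut \<omega>"

definition Aplus2 :: "nat \<Rightarrow> nat \<Rightarrow> nat \<Rightarrow> lnk \<Rightarrow> lnk \<Rightarrow> outcome \<Rightarrow> bool" where
  "Aplus2 tm tb tcut i j \<omega> \<longleftrightarrow>
     Xmax tm tb \<omega> = Xof tm tb i \<omega> \<and> Xmin tm tb \<omega> = Xof tm tb j \<omega> \<and> succ tm tb tcut \<omega>"

text \<open>X_diff: X_max - X_min on A_1^+ \<union> A_2^+, and 2 Xb - X1 - X2 on A_b^+
  (the two expressions agree on the overlaps).  Outside Y=1 it is irrelevant.\<close>
definition Xdiff :: "nat \<Rightarrow> nat \<Rightarrow> outcome \<Rightarrow> real" where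
  "Xdiff tm tb \<omega> =
     (if Xmax tm tb \<omega> = Xof tm tb L1 \<omega> \<or> Xmax tm tb \<omega> = Xof tm tb L2 \<omega>
      then Xmax tm tb \<omega> - Xmin tm tb \<omega>
      else 2 * Xof tm tb Lb \<omega> - Xof tm tb L1 \<omega> - Xof tm tb L2 \<omega>)"

definition U1 :: "real \<Rightarrow> real \<Rightarrow> nat \<Rightarrow> nat \<Rightarrow> nat \<Rightarrow> real \<Rightarrow> real" where
  "U1 pm pb tm tb tcut v =
     measure_pmf.expectation (round_pmf pm pb)
       (\<lambda>\<omega>. exp (- v * Xdiff tm tb \<omega>) * of_bool (succ tm tb tcut \<omega>))"

definition psucc :: "real \<Rightarrow> real \<Rightarrow> nat \<Rightarrow> nat \<Rightarrow> nat \<Rightarrow> real" where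
  "psucc pm pb tm tb tcut = measure_pmf.prob (round_pmf pm pb) {\<omega>. succ tm tb tcut \<omega>}"

text \<open>Depolarising factor of a single qubit stored for time t.
  A single-qubit depolarising channel applied to one qubit of a Werner state with
  parameter w yields a Werner state with parameter (factor) * w.\<close>
definition depol :: "real \<Rightarrow> real \<Rightarrow> real" where
  "depol tcoh t = exp (- t / tcoh)"

text \<open>Werner parameter of the end-to-end link under swap-as-soon-as-possible.
  Border node 1 swaps at s1 = max X1 Xb, border node 2 at s2 = max X2 Xb,
  the end-to-end link exists at T = max s1 s2 and is then stored for t_msg.
  Storage times of the six qubits:
   link 1, end-node qubit: T + tmsg - X1;   link 1, border-1 qubit: s1 - X1;
   link b, border-1 qubit: s1 - Xb;         link b, border-2 qubit: s2 - Xb;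
   link 2, border-2 qubit: s2 - X2;         link 2, end-node qubit: T + tmsg - X2.
  Swaps multiply the Werner parameters; depolarisation commutes with the
  (noiseless) swaps on Werner states.\<close>
definition w_e2e :: "real \<Rightarrow> real \<Rightarrow> real \<Rightarrow> nat \<Rightarrow> nat \<Rightarrow> nat \<Rightarrow> outcome \<Rightarrow> real" where
  "w_e2e wm wb tcoh tm tb tmsg \<omega> =
     (let X1 = Xof tm tb L1 \<omega>; X2 = Xof tm tb L2 \<omega>; Xb = Xof tm tb Lb \<omega>;
          s1 = max X1 Xb; s2 = max X2 Xb; T = max s1 s2; D = T + real tmsg
      in (wm * depol tcoh (D - X1) * depol tcoh (s1 - X1))
         * (wb * depol tcoh (s1 - Xb) * depol tcoh (s2 - Xb))
         * (wm * depol tcoh (s2 - X2) * depol tcoh (D - X2)))"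

definition Ew_e2e :: "real \<Rightarrow> real \<Rightarrow> real \<Rightarrow> real \<Rightarrow> real \<Rightarrow> nat \<Rightarrow> nat \<Rightarrow> nat \<Rightarrow> nat \<Rightarrow> real" where
  "Ew_e2e pm pb wm wb tcoh tm tb tmsg tcut =
     measure_pmf.expectation (round_pmf pm pb)
       (\<lambda>\<omega>. w_e2e wm wb tcoh tm tb tmsg \<omega> * of_bool (succ tm tb tcut \<omega>))
     / psucc pm pb tm tb tcut"

definition F_e2e :: "real \<Rightarrow> real \<Rightarrow> real \<Rightarrow> real \<Rightarrow> real \<Rightarrow> nat \<Rightarrow> nat \<Rightarrow> nat \<Rightarrow> nat \<Rightarrow> real" where
  "F_e2e pm pb wm wb tcoh tm tb tmsg tcut =
     measure_pmf.expectation (round_pmf pm pb)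
       (\<lambda>\<omega>. (1 + 3 * w_e2e wm wb tcoh tm tb tmsg \<omega>) / 4 * of_bool (succ tm tb tcut \<omega>))
     / psucc pm pb tm tb tcut"

end

theory Submission
  imports Defs
begin

text \<open>Under swap-as-soon-as-possible the six qubits spend a total time
  \<open>2 (t_msg + X_diff)\<close> in memory, so pointwise
  \<open>w_e2e = w_m^2 w_b exp (-k t_msg) exp (-k X_diff)\<close>, and the formulas for
  \<open>E(w_e2e)\<close> and \<open>F_e2e\<close> follow by linearity of expectation once \<open>p > 0\<close>
  (the round in which every link is generated at the first attempt succeeds).
  For \<open>U_1\<close>: some link always finishes last, so \<open>{Y = 1}\<close> is the union of
  \<open>A_1^+, A_2^+, A_b^+\<close>; inclusion-exclusion splits \<open>1_{Y=1}\<close> over these events,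
  \<open>A_1^+\<close> splits further into \<open>A_12^+ \<union> A_1b^+\<close>, and on each piece \<open>X_diff\<close> is an
  explicit difference of generation times. The terms for link 2 equal those for
  link 1 because \<open>M_1\<close> and \<open>M_2\<close> are exchangeable.\<close>

lemma of_bool_disj3:
  "(of_bool (P \<or> Q \<or> R) :: 'a::ring_1) = of_bool P + of_bool Q + of_bool R
     - of_bool (P \<and> Q) - of_bool (P \<and> R) - of_bool (Q \<and> R) + of_bool (P \<and> Q \<and> R)"
  by (cases P; cases Q; cases R) simp_all

lemma integrable_exp_mult_of_bool:
  fixes d :: "'a \<Rightarrow> real"
  assumes "\<And>x. E x \<Longrightarrow> \<bar>d x\<bar> \<le> K"
  shows "integrable (measure_pmf P) (\<lambda>x. exp (c * d x) * of_bool (E x))"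
proof (rule measure_pmf.integrable_const_bound[where B = "exp (\<bar>c\<bar> * K)"])
  show "AE x in measure_pmf P. norm (exp (c * d x) * of_bool (E x)) \<le> exp (\<bar>c\<bar> * K)"
  proof (rule AE_I2)
    fix x
    have "E x \<Longrightarrow> c * d x \<le> \<bar>c\<bar> * K"
      using assms[of x] abs_ge_self[of "c * d x"] by (simp add: abs_mult mult_left_mono order_trans)
    then show "norm (exp (c * d x) * of_bool (E x)) \<le> exp (\<bar>c\<bar> * K)"
      by (cases "E x") simp_all
  qed
qed simp

context
  fixes tm tb tcut :: nat
begin

lemma Xof_le_Xmax: "Xof tm tb l \<omega> \<le> Xmax tm tb \<omega>"
  by (cases l) (simp_all add: Xmax_def)

lemma Xmin_le_Xof: "Xmin tm tb \<omega> \<le> Xof tm tb l \<omega>"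
  by (cases l) (simp_all add: Xmin_def)

lemma abs_Xof_diff_le:
  "succ tm tb tcut \<omega> \<Longrightarrow> \<bar>Xof tm tb l \<omega> - Xof tm tb l' \<omega>\<bar> \<le> real tcut"
  using Xof_le_Xmax[of l \<omega>] Xof_le_Xmax[of l' \<omega>] Xmin_le_Xof[of \<omega> l] Xmin_le_Xof[of \<omega> l']
  unfolding succ_def by linarith

lemma succ_iff_Aplus:
  "succ tm tb tcut \<omega> \<longleftrightarrow> Aplus tm tb tcut L1 \<omega> \<or> Aplus tm tb tcut L2 \<omega> \<or> Aplus tm tb tcut Lb \<omega>"
  by (auto simp: Aplus_def Xmax_def max_def)

lemma Aplus_L1_iff:
  "Aplus tm tb tcut L1 \<omega> \<longleftrightarrow> Aplus2 tm tb tcut L1 L2 \<omega> \<or> Aplus2 tm tb tcut L1 Lb \<omega>"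
  using Xof_le_Xmax[of Lb \<omega>] Xof_le_Xmax[of L2 \<omega>]
  by (auto simp: Aplus_def Aplus2_def Xmin_def min_def)

lemma Aplus_L1_L2_imp_Aplus2_L1_Lb:
  "Aplus tm tb tcut L1 \<omega> \<Longrightarrow> Aplus tm tb tcut L2 \<omega> \<Longrightarrow> Aplus2 tm tb tcut L1 Lb \<omega>"
  using Xof_le_Xmax[of Lb \<omega>] by (auto simp: Aplus_def Aplus2_def Xmin_def min_def)

lemma Aplus_L1_Lb_imp_Aplus2_L1_L2:
  "Aplus tm tb tcut L1 \<omega> \<Longrightarrow> Aplus tm tb tcut Lb \<omega> \<Longrightarrow> Aplus2 tm tb tcut L1 L2 \<omega>"
  using Xof_le_Xmax[of L2 \<omega>] by (auto simp: Aplus_def Aplus2_def Xmin_def min_def)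

lemma Xdiff_Aplus2_L1:
  "Aplus2 tm tb tcut L1 l \<omega> \<Longrightarrow> Xdiff tm tb \<omega> = Xof tm tb L1 \<omega> - Xof tm tb l \<omega>"
  by (simp add: Aplus2_def Xdiff_def)

lemma Xdiff_Aplus_Lb:
  "Aplus tm tb tcut Lb \<omega> \<Longrightarrow> Xdiff tm tb \<omega> = 2 * Xof tm tb Lb \<omega> - Xof tm tb L1 \<omega> - Xof tm tb L2 \<omega>"
  using Xof_le_Xmax[of L1 \<omega>] Xof_le_Xmax[of L2 \<omega>]
  by (auto simp: Aplus_def Xdiff_def Xmin_def min_def)

definition swap12 :: "outcome \<Rightarrow> outcome" where
  "swap12 = (\<lambda>(m1, m2, mb). (m2, m1, mb))"

lemma Xof_swap12 [simp]:
  "Xof tm tb L1 (swap12 \<omega>) = Xof tm tb L2 \<omega>"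
  "Xof tm tb L2 (swap12 \<omega>) = Xof tm tb L1 \<omega>"
  "Xof tm tb Lb (swap12 \<omega>) = Xof tm tb Lb \<omega>"
  by (auto simp: swap12_def Xof_def split: prod.splits)

lemma Xmax_swap12 [simp]: "Xmax tm tb (swap12 \<omega>) = Xmax tm tb \<omega>"
  by (simp add: Xmax_def max.left_commute)

lemma Xmin_swap12 [simp]: "Xmin tm tb (swap12 \<omega>) = Xmin tm tb \<omega>"
  by (simp add: Xmin_def min.left_commute)

lemma succ_swap12 [simp]: "succ tm tb tcut (swap12 \<omega>) = succ tm tb tcut \<omega>"
  by (simp add: succ_def)

lemma Aplus_swap12 [simp]:
  "Aplus tm tb tcut L1 (swap12 \<omega>) = Aplus tm tb tcut L2 \<omega>"
  "Aplus tm tb tcut L2 (swap12 \<omega>) = Aplus tm tb tcut L1 \<omega>"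
  "Aplus tm tb tcut Lb (swap12 \<omega>) = Aplus tm tb tcut Lb \<omega>"
  by (simp_all add: Aplus_def)

lemma Xdiff_swap12 [simp]: "Xdiff tm tb (swap12 \<omega>) = Xdiff tm tb \<omega>"
  by (auto simp: Xdiff_def)

lemma exp_Xdiff_mult_Aplus_L1:
  "exp (- v * Xdiff tm tb \<omega>) * of_bool (Aplus tm tb tcut L1 \<omega>) =
     exp (- v * (Xof tm tb L1 \<omega> - Xof tm tb L2 \<omega>)) * of_bool (Aplus2 tm tb tcut L1 L2 \<omega>)
   + exp (- v * (Xof tm tb L1 \<omega> - Xof tm tb Lb \<omega>)) * of_bool (Aplus2 tm tb tcut L1 Lb \<omega>)
   - exp (- v * (Xof tm tb L1 \<omega> - Xof tm tb L2 \<omega>))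
       * of_bool (Aplus2 tm tb tcut L1 L2 \<omega> \<and> Aplus2 tm tb tcut L1 Lb \<omega>)"
  by (cases "Aplus2 tm tb tcut L1 L2 \<omega>"; cases "Aplus2 tm tb tcut L1 Lb \<omega>")
     (simp_all add: Aplus_L1_iff Xdiff_Aplus2_L1, simp add: Aplus2_def)

lemma exp_Xdiff_mult_succ_decomposition:
  fixes v :: real
  defines "T \<equiv> \<lambda>\<omega>.
      exp (- v * (Xof tm tb L1 \<omega> - Xof tm tb L2 \<omega>)) * of_bool (Aplus2 tm tb tcut L1 L2 \<omega>)
    + exp (- v * (Xof tm tb L1 \<omega> - Xof tm tb Lb \<omega>)) * of_bool (Aplus2 tm tb tcut L1 Lb \<omega>)
    - exp (- v * (Xof tm tb L1 \<omega> - Xof tm tb L2 \<omega>))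
        * of_bool (Aplus2 tm tb tcut L1 L2 \<omega> \<and> Aplus2 tm tb tcut L1 Lb \<omega>)"
    and "H \<equiv> \<lambda>\<omega>. exp (- v * (Xof tm tb L1 \<omega> - Xof tm tb L2 \<omega>))
        * of_bool (Aplus tm tb tcut L1 \<omega> \<and> Aplus tm tb tcut Lb \<omega>)"
  shows "exp (- v * Xdiff tm tb \<omega>) * of_bool (succ tm tb tcut \<omega>) =
      T \<omega> + T (swap12 \<omega>)
    + exp (- v * (2 * Xof tm tb Lb \<omega> - Xof tm tb L1 \<omega> - Xof tm tb L2 \<omega>)) * of_bool (Aplus tm tb tcut Lb \<omega>)
    - exp (- v * (Xof tm tb L1 \<omega> - Xof tm tb Lb \<omega>))
        * of_bool (Aplus tm tb tcut L1 \<omega> \<and> Aplus tm tb tcut L2 \<omega>)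
    - H \<omega> - H (swap12 \<omega>)
    + of_bool (Aplus tm tb tcut L1 \<omega> \<and> Aplus tm tb tcut L2 \<omega> \<and> Aplus tm tb tcut Lb \<omega>)"
proof -
  let ?e = "\<lambda>\<omega> P. exp (- v * Xdiff tm tb \<omega>) * of_bool P"
  let ?A = "\<lambda>l. Aplus tm tb tcut l \<omega>"
  have "?e \<omega> (succ tm tb tcut \<omega>) = ?e \<omega> (?A L1) + ?e \<omega> (?A L2) + ?e \<omega> (?A Lb)
      - ?e \<omega> (?A L1 \<and> ?A L2) - ?e \<omega> (?A L1 \<and> ?A Lb) - ?e \<omega> (?A L2 \<and> ?A Lb)
      + ?e \<omega> (?A L1 \<and> ?A L2 \<and> ?A Lb)"
    by (simp add: succ_iff_Aplus of_bool_disj3 algebra_simps)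
  moreover have "?e \<omega> (?A L1) = T \<omega>"
    unfolding T_def by (rule exp_Xdiff_mult_Aplus_L1)
  moreover have "?e \<omega> (?A L2) = T (swap12 \<omega>)"
    using exp_Xdiff_mult_Aplus_L1[of v "swap12 \<omega>"] unfolding T_def by simp
  moreover have "?e \<omega> (?A Lb) =
      exp (- v * (2 * Xof tm tb Lb \<omega> - Xof tm tb L1 \<omega> - Xof tm tb L2 \<omega>)) * of_bool (?A Lb)"
    by (cases "?A Lb") (simp_all add: Xdiff_Aplus_Lb)
  moreover have "?e \<omega> (?A L1 \<and> ?A L2) =
      exp (- v * (Xof tm tb L1 \<omega> - Xof tm tb Lb \<omega>)) * of_bool (?A L1 \<and> ?A L2)"
    by (cases "?A L1 \<and> ?A L2") (simp_all add: Aplus_L1_L2_imp_Aplus2_L1_Lb Xdiff_Aplus2_L1)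
  moreover have "?e \<omega> (?A L1 \<and> ?A Lb) = H \<omega>"
    unfolding H_def by (cases "?A L1 \<and> ?A Lb") (simp_all add: Aplus_L1_Lb_imp_Aplus2_L1_L2 Xdiff_Aplus2_L1)
  moreover have "?e \<omega> (?A L2 \<and> ?A Lb) = H (swap12 \<omega>)"
    unfolding H_def
    using Aplus_L1_Lb_imp_Aplus2_L1_L2[of "swap12 \<omega>"] Xdiff_Aplus2_L1[of L2 "swap12 \<omega>"]
    by (cases "?A L2 \<and> ?A Lb") simp_all
  moreover have "?e \<omega> (?A L1 \<and> ?A L2 \<and> ?A Lb) = of_bool (?A L1 \<and> ?A L2 \<and> ?A Lb)"
    by (cases "?A L1 \<and> ?A L2 \<and> ?A Lb") (simp_all add: Xdiff_Aplus_Lb Aplus_def)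
  ultimately show ?thesis by linarith
qed

lemma abs_Xdiff_le: "succ tm tb tcut \<omega> \<Longrightarrow> \<bar>Xdiff tm tb \<omega>\<bar> \<le> 2 * real tcut"
  using abs_Xof_diff_le[of \<omega> Lb L1] abs_Xof_diff_le[of \<omega> Lb L2]
  by (auto simp: Xdiff_def succ_def Xmax_def Xmin_def)

lemma map_pmf_swap12_round_pmf: "map_pmf swap12 (round_pmf pm pb) = round_pmf pm pb"
proof (rule pmf_eqI)
  fix \<omega>
  have swap12_swap12: "swap12 (swap12 \<omega>') = \<omega>'" for \<omega>'
    by (simp add: swap12_def split: prod.splits)
  then have "inj swap12"
    by (metis injI)
  then have "pmf (map_pmf swap12 (round_pmf pm pb)) \<omega> = pmf (round_pmf pm pb) (swap12 \<omega>)"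
    by (metis pmf_map_inj' swap12_swap12)
  also have "\<dots> = pmf (round_pmf pm pb) \<omega>"
    by (simp add: swap12_def round_pmf_def pmf_pair split: prod.splits)
  finally show "pmf (map_pmf swap12 (round_pmf pm pb)) \<omega> = pmf (round_pmf pm pb) \<omega>" .
qed

lemma integrable_swap12_round_pmf:
  "integrable (measure_pmf (round_pmf pm pb)) (\<lambda>\<omega>. f (swap12 \<omega>))
     \<longleftrightarrow> integrable (measure_pmf (round_pmf pm pb)) (f :: outcome \<Rightarrow> real)"
  by (metis integrable_map_pmf_eq map_pmf_swap12_round_pmf)

lemma expectation_swap12_round_pmf:
  "measure_pmf.expectation (round_pmf pm pb) (\<lambda>\<omega>. f (swap12 \<omega>))
     = measure_pmf.expectation (round_pmf pm pb) (f :: outcome \<Rightarrow> real)"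
  by (metis integral_map_pmf map_pmf_swap12_round_pmf)

lemma U1_decomposition:
  fixes pm pb v :: real
  defines "E \<equiv> measure_pmf.expectation (round_pmf pm pb)"
    and "X \<equiv> Xof tm tb" and "A \<equiv> Aplus tm tb tcut" and "AA \<equiv> Aplus2 tm tb tcut"
  shows "U1 pm pb tm tb tcut v =
            2 * ( E (\<lambda>\<omega>. exp (- v * (X L1 \<omega> - X L2 \<omega>)) * of_bool (AA L1 L2 \<omega>))
                + E (\<lambda>\<omega>. exp (- v * (X L1 \<omega> - X Lb \<omega>)) * of_bool (AA L1 Lb \<omega>))
                - E (\<lambda>\<omega>. exp (- v * (X L1 \<omega> - X L2 \<omega>)) * of_bool (AA L1 L2 \<omega> \<and> AA L1 Lb \<omega>)))
            + E (\<lambda>\<omega>. exp (- v * (2 * X Lb \<omega> - X L1 \<omega> - X L2 \<omega>)) * of_bool (A Lb \<omega>))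
            - E (\<lambda>\<omega>. exp (- v * (X L1 \<omega> - X Lb \<omega>)) * of_bool (A L1 \<omega> \<and> A L2 \<omega>))
            - 2 * E (\<lambda>\<omega>. exp (- v * (X L1 \<omega> - X L2 \<omega>)) * of_bool (A L1 \<omega> \<and> A Lb \<omega>))
            + E (\<lambda>\<omega>. of_bool (A L1 \<omega> \<and> A L2 \<omega> \<and> A Lb \<omega>))"
proof -
  let ?P = "measure_pmf (round_pmf pm pb)"
  have integrable: "integrable ?P (\<lambda>\<omega>. exp (- v * d \<omega>) * of_bool (S \<omega>))"
    if "\<And>\<omega>. S \<omega> \<Longrightarrow> \<bar>d \<omega>\<bar> \<le> 2 * real tcut" for d S
    using that by (rule integrable_exp_mult_of_bool)
  define T where "T \<omega> =
      exp (- v * (X L1 \<omega> - X L2 \<omega>)) * of_bool (AA L1 L2 \<omega>)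
    + exp (- v * (X L1 \<omega> - X Lb \<omega>)) * of_bool (AA L1 Lb \<omega>)
    - exp (- v * (X L1 \<omega> - X L2 \<omega>)) * of_bool (AA L1 L2 \<omega> \<and> AA L1 Lb \<omega>)" for \<omega>
  define H where "H \<omega> = exp (- v * (X L1 \<omega> - X L2 \<omega>)) * of_bool (A L1 \<omega> \<and> A Lb \<omega>)" for \<omega>
  have bound:
    "\<bar>X l \<omega> - X l' \<omega>\<bar> \<le> 2 * real tcut" "\<bar>2 * X Lb \<omega> - X L1 \<omega> - X L2 \<omega>\<bar> \<le> 2 * real tcut"
    if "succ tm tb tcut \<omega>" for l l' \<omega>
    using abs_Xof_diff_le[OF that, of l l'] abs_Xof_diff_le[OF that, of Lb L1]
      abs_Xof_diff_le[OF that, of Lb L2] unfolding X_def by linarith+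
  have int_terms:
    "integrable ?P (\<lambda>\<omega>. exp (- v * (X L1 \<omega> - X L2 \<omega>)) * of_bool (AA L1 L2 \<omega>))"
    "integrable ?P (\<lambda>\<omega>. exp (- v * (X L1 \<omega> - X Lb \<omega>)) * of_bool (AA L1 Lb \<omega>))"
    "integrable ?P (\<lambda>\<omega>. exp (- v * (X L1 \<omega> - X L2 \<omega>)) * of_bool (AA L1 L2 \<omega> \<and> AA L1 Lb \<omega>))"
    "integrable ?P (\<lambda>\<omega>. exp (- v * (2 * X Lb \<omega> - X L1 \<omega> - X L2 \<omega>)) * of_bool (A Lb \<omega>))"
    "integrable ?P (\<lambda>\<omega>. exp (- v * (X L1 \<omega> - X Lb \<omega>)) * of_bool (A L1 \<omega> \<and> A L2 \<omega>))"
    "integrable ?P H"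
    unfolding H_def by (rule integrable; auto simp: A_def AA_def Aplus_def Aplus2_def bound)+
  have int_T: "integrable ?P T"
    using int_terms(1-3) by (simp add: T_def[abs_def])
  have int_swap12: "integrable ?P (\<lambda>\<omega>. T (swap12 \<omega>))" "integrable ?P (\<lambda>\<omega>. H (swap12 \<omega>))"
    using int_T int_terms(6) by (simp_all only: integrable_swap12_round_pmf)
  have int_triple: "integrable ?P (\<lambda>\<omega>. of_bool (A L1 \<omega> \<and> A L2 \<omega> \<and> A Lb \<omega>) :: real)"
    by (rule measure_pmf.integrable_const_bound[where B = 1]) auto
  have "U1 pm pb tm tb tcut v = E (\<lambda>\<omega>. T \<omega> + T (swap12 \<omega>)
      + exp (- v * (2 * X Lb \<omega> - X L1 \<omega> - X L2 \<omega>)) * of_bool (A Lb \<omega>)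
      - exp (- v * (X L1 \<omega> - X Lb \<omega>)) * of_bool (A L1 \<omega> \<and> A L2 \<omega>)
      - H \<omega> - H (swap12 \<omega>) + of_bool (A L1 \<omega> \<and> A L2 \<omega> \<and> A Lb \<omega>))"
    unfolding U1_def E_def X_def A_def AA_def T_def H_def
    by (simp only: exp_Xdiff_mult_succ_decomposition)
  also have "\<dots> = 2 * E T
      + E (\<lambda>\<omega>. exp (- v * (2 * X Lb \<omega> - X L1 \<omega> - X L2 \<omega>)) * of_bool (A Lb \<omega>))
      - E (\<lambda>\<omega>. exp (- v * (X L1 \<omega> - X Lb \<omega>)) * of_bool (A L1 \<omega> \<and> A L2 \<omega>))
      - 2 * E H + E (\<lambda>\<omega>. of_bool (A L1 \<omega> \<and> A L2 \<omega> \<and> A Lb \<omega>))"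
    using int_terms int_T int_swap12 int_triple
    by (simp add: E_def expectation_swap12_round_pmf)
  finally show ?thesis
    using int_terms(1-3) by (simp add: T_def[abs_def] H_def[abs_def] E_def)
qed

text \<open>The right-hand side is half the total storage time of the six qubits, \<open>t_msg\<close> excluded.\<close>

lemma Xdiff_eq_storage_time:
  fixes \<omega> :: outcome
  defines "s1 \<equiv> max (Xof tm tb L1 \<omega>) (Xof tm tb Lb \<omega>)"
    and "s2 \<equiv> max (Xof tm tb L2 \<omega>) (Xof tm tb Lb \<omega>)"
  shows "Xdiff tm tb \<omega> = max s1 s2 + s1 + s2 - Xof tm tb L1 \<omega> - Xof tm tb L2 \<omega> - Xof tm tb Lb \<omega>"
  unfolding s1_def s2_def Xdiff_def Xmax_def Xmin_def
  by (cases "Xof tm tb L1 \<omega> \<le> Xof tm tb L2 \<omega>"; cases "Xof tm tb L2 \<omega> \<le> Xof tm tb Lb \<omega>";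
      cases "Xof tm tb L1 \<omega> \<le> Xof tm tb Lb \<omega>") (simp_all add: max_def min_def)

lemma w_e2e_eq:
  "w_e2e wm wb tcoh tm tb tmsg \<omega>
     = wm\<^sup>2 * wb * exp (- (2 / tcoh) * real tmsg) * exp (- (2 / tcoh) * Xdiff tm tb \<omega>)"
proof -
  define X1 X2 Xb where "X1 = Xof tm tb L1 \<omega>" and "X2 = Xof tm tb L2 \<omega>" and "Xb = Xof tm tb Lb \<omega>"
  define s1 s2 where "s1 = max X1 Xb" and "s2 = max X2 Xb"
  define D where "D = max s1 s2 + real tmsg"
  have "w_e2e wm wb tcoh tm tb tmsg \<omega> = wm\<^sup>2 * wb * exp (- (D - X1) / tcoh + - (s1 - X1) / tcoh
      + - (s1 - Xb) / tcoh + - (s2 - Xb) / tcoh + - (s2 - X2) / tcoh + - (D - X2) / tcoh)"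
    unfolding w_e2e_def Let_def depol_def X1_def X2_def Xb_def s1_def s2_def D_def
    by (simp add: exp_add power2_eq_square mult_ac)
  also have "- (D - X1) / tcoh + - (s1 - X1) / tcoh + - (s1 - Xb) / tcoh + - (s2 - Xb) / tcoh
      + - (s2 - X2) / tcoh + - (D - X2) / tcoh = - (2 / tcoh) * real tmsg + - (2 / tcoh) * Xdiff tm tb \<omega>"
    unfolding Xdiff_eq_storage_time D_def s1_def s2_def X1_def X2_def Xb_def
    by (simp add: field_split_simps)
  finally show ?thesis
    by (simp only: exp_add mult.assoc)
qed

lemma integrable_w_e2e_mult_succ:
  "integrable (measure_pmf P) (\<lambda>\<omega>. w_e2e wm wb tcoh tm tb tmsg \<omega> * of_bool (succ tm tb tcut \<omega>))"
proof -
  have "integrable (measure_pmf P) (\<lambda>\<omega>. exp (- (2 / tcoh) * Xdiff tm tb \<omega>) * of_bool (succ tm tb tcut \<omega>))"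
    by (rule integrable_exp_mult_of_bool) (rule abs_Xdiff_le)
  then show ?thesis
    by (simp add: w_e2e_eq mult.assoc)
qed

lemma expectation_w_e2e_mult_succ:
  "measure_pmf.expectation (round_pmf pm pb) (\<lambda>\<omega>. w_e2e wm wb tcoh tm tb tmsg \<omega> * of_bool (succ tm tb tcut \<omega>))
     = wm\<^sup>2 * wb * exp (- (2 / tcoh) * real tmsg) * U1 pm pb tm tb tcut (2 / tcoh)"
  by (simp add: U1_def w_e2e_eq mult.assoc)

lemma psucc_pos:
  assumes "tm < tcut" and "tb < tcut" and "0 < pm" and "pm < 1" and "0 < pb" and "pb < 1"
  shows "psucc pm pb tm tb tcut > 0"
  unfolding psucc_def
proof (rule measure_pmf_posI)
  show "(1, 1, 1) \<in> set_pmf (round_pmf pm pb)"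
    using assms by (simp add: round_pmf_def geom1_def set_pmf_geometric)
  show "(1, 1, 1) \<in> {\<omega>. succ tm tb tcut \<omega>}"
    using assms by (simp add: succ_def Xmax_def Xmin_def Xof_def max_def min_def)
qed

lemma F_e2e_eq:
  assumes "psucc pm pb tm tb tcut > 0"
  shows "F_e2e pm pb wm wb tcoh tm tb tmsg tcut = (1 + 3 * Ew_e2e pm pb wm wb tcoh tm tb tmsg tcut) / 4"
proof -
  let ?E = "measure_pmf.expectation (round_pmf pm pb)"
  let ?w = "\<lambda>\<omega>. w_e2e wm wb tcoh tm tb tmsg \<omega> * of_bool (succ tm tb tcut \<omega>)"
  let ?p = "psucc pm pb tm tb tcut"
  have succ_integrable: "integrable (measure_pmf (round_pmf pm pb)) (\<lambda>\<omega>. of_bool (succ tm tb tcut \<omega>) :: real)"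
    by (rule measure_pmf.integrable_const_bound[where B = 1]) auto
  have "(\<lambda>\<omega>. of_bool (succ tm tb tcut \<omega>) :: real) = indicator {\<omega>. succ tm tb tcut \<omega>}"
    by (auto simp: indicator_def)
  then have "?E (\<lambda>\<omega>. of_bool (succ tm tb tcut \<omega>)) = ?p"
    by (simp add: psucc_def)
  then have "?E (\<lambda>\<omega>. (1 + 3 * w_e2e wm wb tcoh tm tb tmsg \<omega>) / 4 * of_bool (succ tm tb tcut \<omega>))
      = (?p + 3 * ?E ?w) / 4"
    using succ_integrable integrable_w_e2e_mult_succ
    by (simp add: add_divide_distrib distrib_right mult.assoc)
  then show ?thesis
    using assms by (simp add: F_e2e_def Ew_e2e_def field_simps)
qed

end

theorem mainTheorem2:
  fixes tm tb tmsg tcut :: nat and pm pb wm wb tcoh :: real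
  assumes "tm \<ge> 1" and "tb \<ge> 1" and "tcut > max tm (max tb tmsg)"
    and "0 < pm" and "pm < 1" and "0 < pb" and "pb < 1" and "tcoh > 0"
  defines "P \<equiv> round_pmf pm pb"
    and "X \<equiv> Xof tm tb"
    and "A \<equiv> Aplus tm tb tcut"
    and "AA \<equiv> Aplus2 tm tb tcut"
    and "k \<equiv> 2 / tcoh"
  shows "F_e2e pm pb wm wb tcoh tm tb tmsg tcut
           = (1 + 3 * Ew_e2e pm pb wm wb tcoh tm tb tmsg tcut) / 4
       \<and> Ew_e2e pm pb wm wb tcoh tm tb tmsg tcut
           = wm ^ 2 * wb * exp (- k * real tmsg) / psucc pm pb tm tb tcut
             * U1 pm pb tm tb tcut k
       \<and> (\<forall>v::real. U1 pm pb tm tb tcut v =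
            2 * ( measure_pmf.expectation P (\<lambda>\<omega>. exp (- v * (X L1 \<omega> - X L2 \<omega>)) * of_bool (AA L1 L2 \<omega>))
                + measure_pmf.expectation P (\<lambda>\<omega>. exp (- v * (X L1 \<omega> - X Lb \<omega>)) * of_bool (AA L1 Lb \<omega>))
                - measure_pmf.expectation P (\<lambda>\<omega>. exp (- v * (X L1 \<omega> - X L2 \<omega>)) * of_bool (AA L1 L2 \<omega> \<and> AA L1 Lb \<omega>)))
            + measure_pmf.expectation P (\<lambda>\<omega>. exp (- v * (2 * X Lb \<omega> - X L1 \<omega> - X L2 \<omega>)) * of_bool (A Lb \<omega>))
            - measure_pmf.expectation P (\<lambda>\<omega>. exp (- v * (X L1 \<omega> - X Lb \<omega>)) * of_bool (A L1 \<omega> \<and> A L2 \<omega>))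
            - 2 * measure_pmf.expectation P (\<lambda>\<omega>. exp (- v * (X L1 \<omega> - X L2 \<omega>)) * of_bool (A L1 \<omega> \<and> A Lb \<omega>))
            + measure_pmf.expectation P (\<lambda>\<omega>. of_bool (A L1 \<omega> \<and> A L2 \<omega> \<and> A Lb \<omega>)))"
proof -
  have "psucc pm pb tm tb tcut > 0"
    using assms(3-7) by (intro psucc_pos) auto
  then have "F_e2e pm pb wm wb tcoh tm tb tmsg tcut = (1 + 3 * Ew_e2e pm pb wm wb tcoh tm tb tmsg tcut) / 4"
    by (rule F_e2e_eq)
  moreover have "Ew_e2e pm pb wm wb tcoh tm tb tmsg tcut
      = wm ^ 2 * wb * exp (- k * real tmsg) / psucc pm pb tm tb tcut * U1 pm pb tm tb tcut k"
    by (simp add: Ew_e2e_def expectation_w_e2e_mult_succ k_def)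
  ultimately show ?thesis
    unfolding P_def X_def A_def AA_def using U1_decomposition by blast
qed

end
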